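(* Let $d\ge 3$, $g\ge d$, and write $g=k(d-1)+s$ with $k\ge1$ and $0\le s\le d-2$; put $b=2g+2d-2$. Among all $(d-1)$-tuples that are acceptable for $(d,g)$ and have $a_1=k$, the unique one maximizing $\sum_{i=1}^{d-1}(d-i)a_i$ is: (1) if $s\le d-4$: $(k,(k+1)^{d-s-3},(k+2)^{s+1})$; (2) if $s=d-3$ and $g\neq 2(d-2)$: $(k,(k+2)^{d-2})$; (3) if $s=d-2$, $g\ne 2d-3$ and $(d,g)\ne(3,5)$: $(k,(k+2)^{d-3},k+3)$. (Here $x^m$ denotes $m$ consecutive entries equal to $x$.)
   Context: A non-decreasing $(d-1)$-tuple of natural numbers $(a_1,\dots,a_{d-1})$ with $\sum_{i=1}^{d-1}a_i=b/2$ (where $b=2g+2d-2$, so $b/2=(k+1)(d-1)+s$) is called acceptable for $(d,g)$ if (i) $a_1\ge b/(d(d-1))$; (ii) $a_{d-1}\le b/d$; (iii) $a_{i+1}-a_i\le a_1$ for all $i$. *)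

theory Defs
  imports Complex_Main
begin

text \<open>A (d-1)-tuple (a_1,...,a_{d-1}) is represented as a list a of length d-1,
  with a_i = a ! (i-1). b = 2g + 2d - 2.\<close>

definition bval :: "nat \<Rightarrow> nat \<Rightarrow> nat" where
  "bval d g = 2 * g + 2 * d - 2"

definition acceptable :: "nat \<Rightarrow> nat \<Rightarrow> nat list \<Rightarrow> bool" where
  "acceptable d g a \<longleftrightarrow>
     length a = d - 1 \<and> sorted a \<and>
     2 * sum_list a = bval d g \<and>
     real (a ! 0) \<ge> real (bval d g) / (real d * (real d - 1)) \<and>
     real (a ! (d - 2)) \<le> real (bval d g) / real d \<and>
     (\<forall>i. i + 1 < d - 1 \<longrightarrow> a ! (i + 1) - a ! i \<le> a ! 0)"

definition weight :: "nat \<Rightarrow> nat list \<Rightarrow> nat" where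
  "weight d a = (\<Sum>i<d - 1. (d - 1 - i) * a ! i)"

definition unique_max :: "nat \<Rightarrow> nat \<Rightarrow> nat \<Rightarrow> nat list \<Rightarrow> bool" where
  "unique_max d g k t \<longleftrightarrow>
     acceptable d g t \<and> t ! 0 = k \<and>
     (\<forall>a. acceptable d g a \<and> a ! 0 = k \<and> a \<noteq> t \<longrightarrow> weight d a < weight d t)"

end

theory Submission
  imports Defs
begin

text \<open>Writing the weight as a sum of partial sums, a tuple with weight as large as possible must
  have every partial sum as large as possible. With the first entry and the total fixed, a sorted
  tail has its partial sums dominated by those of the most even tail, which takes only two
  consecutive values; any other sorted tail falls strictly short at some point. So the claimed
  tuples, which are exactly first entry k followed by the most even tail, are the unique
  maximizers, and it only remains to check that they are acceptable.\<close>

definition balanced :: "nat \<Rightarrow> nat \<Rightarrow> nat \<Rightarrow> nat list" where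
  "balanced n r q = replicate (n - r) q @ replicate r (Suc q)"

lemma length_balanced [simp]: "r \<le> n \<Longrightarrow> length (balanced n r q) = n"
  by (simp add: balanced_def)

lemma sum_list_balanced: "r \<le> n \<Longrightarrow> sum_list (balanced n r q) = q * n + r"
proof -
  assume "r \<le> n"
  then have "(n - r) * q + r * q = n * q"
    by (metis add_mult_distrib le_add_diff_inverse2)
  then show ?thesis
    by (simp add: balanced_def sum_list_replicate algebra_simps)
qed

lemma nth_balanced:
  "r \<le> n \<Longrightarrow> i < n \<Longrightarrow> balanced n r q ! i = (if i < n - r then q else Suc q)"
  by (auto simp: balanced_def nth_append)

lemma partial_sum_balanced:
  assumes "r \<le> n" "m \<le> n"
  shows "(\<Sum>i<m. balanced n r q ! i) = m * q + (m - (n - r))"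
proof -
  have "(\<Sum>i<m. balanced n r q ! i) = (\<Sum>i<m. if i < n - r then q else Suc q)"
    using assms by (intro sum.cong) (auto simp: nth_balanced)
  also have "\<dots> = m * q + (m - (n - r))"
    by (induction m) auto
  finally show ?thesis .
qed

lemma partial_sum_le_balanced:
  assumes srt: "sorted ys" and len: "length ys = n" and sum: "sum_list ys = q * n + r"
    and rn: "r \<le> n" and mn: "m \<le> n"
  shows "(\<Sum>i<m. ys ! i) \<le> (\<Sum>i<m. balanced n r q ! i)"
proof (cases m)
  case 0
  then show ?thesis by simp
next
  case (Suc m')
  have mono: "\<And>i j. i \<le> j \<Longrightarrow> j < n \<Longrightarrow> ys ! i \<le> ys ! j"
    using srt len by (simp add: sorted_iff_nth_mono)
  have "m' < n" using Suc mn by simp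
  have "(\<Sum>i<m. ys ! i) \<le> m * q + (m - (n - r))"
  proof (cases "ys ! m' \<le> q")
    case True
    have "(\<Sum>i<m. ys ! i) \<le> (\<Sum>i<m. q)"
      using Suc mono \<open>m' < n\<close> True by (intro sum_mono) (meson lessThan_iff less_Suc_eq_le order_trans)
    then show ?thesis by simp
  next
    case False
    \<comment> \<open>the entries from position m on all exceed q, which leaves too little for the first m\<close>
    have "(\<Sum>i\<in>{m..<n}. Suc q) \<le> (\<Sum>i\<in>{m..<n}. ys ! i)"
    proof (rule sum_mono)
      fix i assume "i \<in> {m..<n}"
      then have "ys ! m' \<le> ys ! i" using Suc mono by simp
      then show "Suc q \<le> ys ! i" using False by simp
    qed
    moreover have "(\<Sum>i<n. ys ! i) = (\<Sum>i<m. ys ! i) + (\<Sum>i\<in>{m..<n}. ys ! i)"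
      using mn by (metis atLeast0LessThan sum.atLeastLessThan_concat zero_le)
    moreover have "sum_list ys = (\<Sum>i<n. ys ! i)"
      using len by (simp add: sum_list_sum_nth atLeast0LessThan)
    ultimately have "(\<Sum>i<m. ys ! i) + (n - m) * Suc q \<le> q * n + r"
      using sum by simp
    moreover obtain p where p: "n = m + p" using mn le_Suc_ex by blast
    ultimately have "(\<Sum>i<m. ys ! i) + p \<le> m * q + r"
      by (simp add: algebra_simps)
    moreover have "m - (n - r) = r - p" using p rn by simp
    ultimately show ?thesis by linarith
  qed
  then show ?thesis using partial_sum_balanced[OF rn mn] by simp
qed

lemma sum_diff_mult_eq_sum_partial_sums:
  fixes x :: "nat \<Rightarrow> nat"
  shows "(\<Sum>i<n. (n - i) * x i) = (\<Sum>m<n. \<Sum>i<Suc m. x i)"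
proof (induction n)
  case 0
  then show ?case by simp
next
  case (Suc n)
  have "(\<Sum>i<Suc n. (Suc n - i) * x i) = (\<Sum>i<n. x i) + (\<Sum>i<n. (n - i) * x i) + x n"
    by (simp add: Suc_diff_le sum.distrib)
  then show ?case using Suc by simp
qed

lemma weighted_sum_less_balanced:
  assumes srt: "sorted ys" and len: "length ys = n" and sum: "sum_list ys = q * n + r"
    and rn: "r \<le> n" and ne: "ys \<noteq> balanced n r q"
  shows "(\<Sum>i<n. (n - i) * ys ! i) < (\<Sum>i<n. (n - i) * balanced n r q ! i)"
proof -
  have le: "(\<Sum>i<Suc m. ys ! i) \<le> (\<Sum>i<Suc m. balanced n r q ! i)" if "m < n" for m
    using partial_sum_le_balanced[OF srt len sum rn, of "Suc m"] that by simp
  have "\<exists>m\<in>{..<n}. (\<Sum>i<Suc m. ys ! i) < (\<Sum>i<Suc m. balanced n r q ! i)"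
  proof (rule ccontr)
    assume "\<not> ?thesis"
    then have eq: "\<And>m. m < n \<Longrightarrow> (\<Sum>i<Suc m. ys ! i) = (\<Sum>i<Suc m. balanced n r q ! i)"
      using le by (meson lessThan_iff le_antisym not_le)
    have "ys ! i = balanced n r q ! i" if "i < n" for i
    proof (cases i)
      case 0
      then show ?thesis using eq[of 0] that by simp
    next
      case (Suc j)
      then show ?thesis using eq[of i] eq[of j] that by simp
    qed
    then have "ys = balanced n r q"
      using len rn by (intro nth_equalityI) auto
    then show False using ne by simp
  qed
  then have "(\<Sum>m<n. \<Sum>i<Suc m. ys ! i) < (\<Sum>m<n. \<Sum>i<Suc m. balanced n r q ! i)"
    using le by (intro sum_strict_mono_ex1) auto
  then show ?thesis by (simp only: sum_diff_mult_eq_sum_partial_sums)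
qed

lemma weight_Cons:
  assumes "length ys = d - 2" "d \<ge> 2"
  shows "weight d (k # ys) = (d - 1) * k + (\<Sum>i<d - 2. (d - 2 - i) * ys ! i)"
proof -
  have "d - 1 = Suc (d - 2)" using assms(2) by simp
  then show ?thesis
    unfolding weight_def by (simp only: sum.lessThan_Suc_shift) simp
qed

lemma unique_max_Cons_balanced:
  assumes "d \<ge> 2" "r \<le> d - 2" and acc: "acceptable d g (k # balanced (d - 2) r q)"
  shows "unique_max d g k (k # balanced (d - 2) r q)"
  unfolding unique_max_def
proof (intro conjI allI impI)
  fix a assume a: "acceptable d g a \<and> a ! 0 = k \<and> a \<noteq> k # balanced (d - 2) r q"
  then obtain ys where ys: "a = k # ys"
    using assms(1) unfolding acceptable_def by (cases a) auto
  have "sorted ys" "length ys = d - 2" "sum_list ys = q * (d - 2) + r"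
    using a acc assms(2) unfolding ys acceptable_def by (auto simp: sum_list_balanced)
  with weighted_sum_less_balanced[OF this] a ys assms
  show "weight d a < weight d (k # balanced (d - 2) r q)"
    by (simp add: weight_Cons)
qed (use acc in simp_all)

lemma real_le_div_mult_pred:
  assumes "d \<ge> 2" "b \<le> x * (d * (d - 1))"
  shows "real b / (real d * (real d - 1)) \<le> real x"
proof -
  have "real (d - 1) = real d - 1" using assms(1) by simp
  then have "real b \<le> real x * (real d * (real d - 1))"
    using assms(2) by (metis of_nat_le_iff of_nat_mult)
  then show ?thesis using assms(1) by (simp add: divide_le_eq)
qed

lemma real_le_div:
  assumes "d \<ge> 1" "x * d \<le> b"
  shows "real x \<le> real b / real d"
proof -
  have "real x * real d \<le> real b" using assms(2) by (metis of_nat_le_iff of_nat_mult)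
  then show ?thesis using assms(1) by (simp add: le_divide_eq)
qed

lemma acceptable_Cons_balanced:
  assumes d3: "d \<ge> 3" and r: "r \<le> d - 2" and kq: "k \<le> q" and k1: "1 \<le> k"
    and sum: "2 * (k + q * (d - 2) + r) = bval d g"
    and lower: "bval d g \<le> k * (d * (d - 1))"
    and first_gap: "hd (balanced (d - 2) r q) \<le> 2 * k"
    and upper: "last (balanced (d - 2) r q) * d \<le> bval d g"
  shows "acceptable d g (k # balanced (d - 2) r q)"
proof -
  define n where "n = d - 2"
  have n: "d - 1 = Suc n" "0 < n" using d3 by (auto simp: n_def)
  have rn: "r \<le> n" using r by (simp add: n_def)
  then have ne: "balanced n r q \<noteq> []"
    using n(2) length_balanced[OF rn, of q] by (metis list.size(3) less_not_refl)
  have hd: "balanced n r q ! 0 \<le> 2 * k"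
    using first_gap ne by (simp add: hd_conv_nth n_def)
  have last: "(k # balanced n r q) ! n * d \<le> bval d g"
    using upper ne rn n by (simp add: last_conv_nth n_def)
  have gaps: "(k # balanced n r q) ! (i + 1) - (k # balanced n r q) ! i \<le> k"
    if "i + 1 < d - 1" for i
  proof (cases i)
    case 0
    then show ?thesis using hd by simp
  next
    case (Suc j)
    then show ?thesis
      using that n k1 nth_balanced[OF rn, of j q] nth_balanced[OF rn, of "Suc j" q] by auto
  qed
  show ?thesis
    unfolding acceptable_def n_def[symmetric] n(1)
  proof (intro conjI allI impI)
    show "sorted (k # balanced n r q)"
      using kq by (auto simp: balanced_def sorted_append)
    show "2 * sum_list (k # balanced n r q) = bval d g"
      using sum rn by (simp add: sum_list_balanced n_def)
    show "real (bval d g) / (real d * (real d - 1)) \<le> real ((k # balanced n r q) ! 0)"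
      using real_le_div_mult_pred[OF _ lower] d3 by simp
    show "real ((k # balanced n r q) ! n) \<le> real (bval d g) / real d"
      using real_le_div[OF _ last] d3 by simp
  qed (use rn gaps n in auto)
qed

lemma unique_max_Cons_balancedI:
  assumes "d \<ge> 3" "r \<le> d - 2" "k \<le> q" "1 \<le> k"
    "2 * (k + q * (d - 2) + r) = bval d g"
    "bval d g \<le> k * (d * (d - 1))"
    "hd (balanced (d - 2) r q) \<le> 2 * k"
    "last (balanced (d - 2) r q) * d \<le> bval d g"
  shows "unique_max d g k (k # balanced (d - 2) r q)"
  using assms by (intro unique_max_Cons_balanced acceptable_Cons_balanced) auto

lemma unique_max_remainder_le_d_minus_4:
  assumes "d \<ge> 3" "g = k * (d - 1) + s" "k \<ge> 1" "s + 4 \<le> d"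
  shows "unique_max d g k ([k] @ replicate (d - s - 3) (k + 1) @ replicate (s + 1) (k + 2))"
proof -
  obtain f where d: "d = s + f + 4" using assms(4) by (auto simp: le_iff_add)
  obtain k' where k: "k = k' + 1" using assms(3) by (auto simp: le_iff_add)
  have d12: "d - 1 = s + f + 3" "d - 2 = s + f + 2" using d by auto
  have t: "[k] @ replicate (d - s - 3) (k + 1) @ replicate (s + 1) (k + 2)
      = k # balanced (d - 2) (s + 1) (k + 1)"
    using d by (simp add: balanced_def)
  have "2 * (k + (k + 1) * (d - 2) + (s + 1)) = bval d g"
    "bval d g \<le> k * (d * (d - 1))" "(k + 2) * d \<le> bval d g"
    unfolding bval_def assms(2) d12 unfolding d k by (simp_all add: algebra_simps)
  moreover have "hd (balanced (d - 2) (s + 1) (k + 1)) = k + 1"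
    "last (balanced (d - 2) (s + 1) (k + 1)) = k + 2"
    unfolding d12 by (simp_all add: balanced_def)
  ultimately show ?thesis
    unfolding t using assms(1,3) d by (intro unique_max_Cons_balancedI) auto
qed

lemma unique_max_remainder_eq_d_minus_3:
  assumes "d \<ge> 3" "g = k * (d - 1) + s" "k \<ge> 1" "s + 3 = d" "g \<noteq> 2 * (d - 2)"
  shows "unique_max d g k ([k] @ replicate (d - 2) (k + 2))"
proof -
  obtain e where d: "d = e + 3" using assms(1) by (auto simp: le_iff_add)
  have s: "s = e" using assms(4) d by simp
  have "k \<ge> 2" using assms(2,3,5) d s by (cases "k = 1") auto
  then obtain k' where k: "k = k' + 2" by (auto simp: le_iff_add)
  have d12: "d - 1 = e + 2" "d - 2 = e + 1" using d by auto
  have t: "[k] @ replicate (d - 2) (k + 2) = k # balanced (d - 2) 0 (k + 2)"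
    by (simp add: balanced_def)
  have "2 * (k + (k + 2) * (d - 2) + 0) = bval d g"
    "bval d g \<le> k * (d * (d - 1))" "(k + 2) * d \<le> bval d g"
    unfolding bval_def assms(2) d12 unfolding d k s by (simp_all add: algebra_simps)
  moreover have "hd (balanced (d - 2) 0 (k + 2)) = k + 2"
    "last (balanced (d - 2) 0 (k + 2)) = k + 2"
    unfolding d12 by (simp_all add: balanced_def)
  ultimately show ?thesis
    unfolding t using assms(1) k by (intro unique_max_Cons_balancedI) auto
qed

lemma unique_max_remainder_eq_d_minus_2:
  assumes "d \<ge> 3" "g = k * (d - 1) + s" "k \<ge> 1" "s + 2 = d" "g \<noteq> 2 * d - 3"
    "(d, g) \<noteq> (3, 5)"
  shows "unique_max d g k ([k] @ replicate (d - 3) (k + 2) @ [k + 3])"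
proof -
  obtain e where d: "d = e + 3" using assms(1) by (auto simp: le_iff_add)
  have s: "s = e + 1" using assms(4) d by simp
  have "k \<ge> 2" using assms(2,3,5) d s by (cases "k = 1") auto
  then obtain k' where k: "k = k' + 2" by (auto simp: le_iff_add)
  have e0: "e = 0 \<Longrightarrow> k' \<noteq> 0" using assms(2,6) d s k by auto
  have d12: "d - 1 = e + 2" "d - 2 = e + 1" using d by auto
  have t: "[k] @ replicate (d - 3) (k + 2) @ [k + 3] = k # balanced (d - 2) 1 (k + 2)"
    using d by (simp add: balanced_def)
  have "2 * (k + (k + 2) * (d - 2) + 1) = bval d g"
    unfolding bval_def assms(2) d12 unfolding d k s by (simp add: algebra_simps)
  moreover have "bval d g \<le> k * (d * (d - 1)) \<and> (k + 3) * d \<le> bval d g"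
  proof (cases "e = 0")
    case True
    then obtain j where "k' = j + 1" using e0 by (auto simp: neq0_conv dest: less_imp_Suc_add)
    then show ?thesis unfolding bval_def assms(2) d12 unfolding d k s True
      by (simp add: algebra_simps)
  next
    case False
    then obtain j where "e = j + 1" by (auto simp: neq0_conv dest: less_imp_Suc_add)
    then show ?thesis unfolding bval_def assms(2) d12 unfolding d k s
      by (simp add: algebra_simps)
  qed
  moreover have "hd (balanced (d - 2) 1 (k + 2)) \<le> 2 * k"
    unfolding d12 using e0 k by (cases e) (auto simp: balanced_def)
  moreover have "last (balanced (d - 2) 1 (k + 2)) = k + 3"
    unfolding d12 by (simp add: balanced_def)
  ultimately show ?thesis
    unfolding t using assms(1) d k by (intro unique_max_Cons_balancedI) auto
qed

theorem mainTheorem4: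
  fixes d g k s :: nat
  assumes "d \<ge> 3" and "g \<ge> d" and "g = k * (d - 1) + s" and "k \<ge> 1" and "s \<le> d - 2"
  shows "(s + 4 \<le> d \<longrightarrow>
            unique_max d g k ([k] @ replicate (d - s - 3) (k + 1) @ replicate (s + 1) (k + 2)))
       \<and> (s + 3 = d \<and> g \<noteq> 2 * (d - 2) \<longrightarrow>
            unique_max d g k ([k] @ replicate (d - 2) (k + 2)))
       \<and> (s + 2 = d \<and> g \<noteq> 2 * d - 3 \<and> (d, g) \<noteq> (3, 5) \<longrightarrow>
            unique_max d g k ([k] @ replicate (d - 3) (k + 2) @ [k + 3]))"
  using unique_max_remainder_le_d_minus_4[OF assms(1,3,4)]
    unique_max_remainder_eq_d_minus_3[OF assms(1,3,4)]
    unique_max_remainder_eq_d_minus_2[OF assms(1,3,4)]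
  by blast

end
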